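(* Let $q>2$ be an integer and $z\geq 2$. Consider the mean-field equation in $u\in[0,1)$, $$u=\frac{1-\exp(\Delta_{\beta,q,z}(u))}{1+(q-1)\exp(\Delta_{\beta,q,z}(u))},\qquad\Delta_{\beta,q,z}(u):=-\frac{\beta}{q^{z-1}}\Big[(1+(q-1)u)^{z-1}-(1-u)^{z-1}\Big].$$ There exist $0<\beta_0(q,z)<\beta_1(q,z)$ such that: for $0<\beta<\beta_0$ the mean-field equation has only the trivial solution $u=0$; for $\beta_0<\beta<\beta_1$ it has exactly two additional solutions $0<u_1<u_2<1$; for $\beta=\beta_0$ or $\beta\geq\beta_1$ it has exactly one additional solution $0<u_2<1$. *)

theory Defs
  imports Complex_Main
begin

definition mf_Delta :: "real \<Rightarrow> nat \<Rightarrow> nat \<Rightarrow> real \<Rightarrow> real" where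
  "mf_Delta \<beta> q z u =
     - (\<beta> / real q ^ (z - 1)) * ((1 + (real q - 1) * u) ^ (z - 1) - (1 - u) ^ (z - 1))"

definition mf_solutions :: "real \<Rightarrow> nat \<Rightarrow> nat \<Rightarrow> real set" where
  "mf_solutions \<beta> q z =
     {u. 0 \<le> u \<and> u < 1 \<and>
         u = (1 - exp (mf_Delta \<beta> q z u)) / (1 + (real q - 1) * exp (mf_Delta \<beta> q z u))}"

end

theory Submission
  imports Defs
begin

(* Write m = q - 1, n = z - 1 and t = (1 - u) / (1 + m u). The right-hand side of the mean-field
   equation is this same involutive Moebius map applied to exp Delta(u), so the equation says
   exp Delta(u) = t. Thus u = 0 always solves it, and u in (0,1) solves it iff t in (0,1) satisfies
   beta = K(t) := - ln t (1 + m t)^n / (1 - t^n).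

   K tends to +infinity as t -> 0 and to (1 + m)^n / n as t -> 1. Its derivative is - c(t) Z(t) with
   c > 0, and Z' has the sign of S(t) = m t^n - m + n m^2 t - n t^(n-1), which changes sign exactly
   once. So Z decreases and then increases up to Z(1) = 0; since K is unbounded near 0, Z cannot stay
   nonpositive there, hence Z has a single zero T and K decreases on (0,T] and increases on [T,1).
   Counting the points of the level sets of this valley gives the theorem with beta0 = K(T) and
   beta1 = (1 + m)^n / n. *)

section \<open>Monotonicity and valley-shaped functions\<close>

lemma DERIV_pos_interior_imp_less:
  fixes f :: "real \<Rightarrow> real"
  assumes "a < b"
    and "\<And>x. a \<le> x \<Longrightarrow> x \<le> b \<Longrightarrow> (f has_real_derivative f' x) (at x)"
    and "\<And>x. a < x \<Longrightarrow> x < b \<Longrightarrow> f' x > 0"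
  shows "f a < f b"
proof (rule DERIV_pos_imp_increasing_open[OF \<open>a < b\<close>])
  show "\<exists>y. (f has_real_derivative y) (at x) \<and> y > 0" if "a < x" "x < b" for x
    using assms(2,3) that by (meson less_imp_le)
  show "continuous_on {a..b} f"
    using assms(2) by (blast intro: DERIV_atLeastAtMost_imp_continuous_on)
qed

lemma DERIV_neg_interior_imp_greater:
  fixes f :: "real \<Rightarrow> real"
  assumes "a < b"
    and "\<And>x. a \<le> x \<Longrightarrow> x \<le> b \<Longrightarrow> (f has_real_derivative f' x) (at x)"
    and "\<And>x. a < x \<Longrightarrow> x < b \<Longrightarrow> f' x < 0"
  shows "f a > f b"
proof (rule DERIV_neg_imp_decreasing_open[OF \<open>a < b\<close>])
  show "\<exists>y. (f has_real_derivative y) (at x) \<and> y < 0" if "a < x" "x < b" for x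
    using assms(2,3) that by (meson less_imp_le)
  show "continuous_on {a..b} f"
    using assms(2) by (blast intro: DERIV_atLeastAtMost_imp_continuous_on)
qed

lemma filterlim_at_top_at_right_obtain:
  fixes f :: "real \<Rightarrow> real"
  assumes "filterlim f at_top (at_right a)" "a < b"
  obtains t where "a < t" "t < b" "f t > B"
proof -
  have "eventually (\<lambda>t. f t > B) (at_right a)"
    using assms(1) by (simp add: filterlim_at_top_dense)
  moreover have "eventually (\<lambda>t. t \<in> {a<..<b}) (at_right a)"
    using assms(2) by (rule eventually_at_right_real)
  ultimately have "eventually (\<lambda>t. f t > B \<and> t \<in> {a<..<b}) (at_right a)"
    by (rule eventually_conj)
  then obtain t where "f t > B" "t \<in> {a<..<b}"
    using eventually_happens' trivial_limit_at_right_real by blast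
  then show thesis
    by (intro that) auto
qed

locale valley =
  fixes f :: "real \<Rightarrow> real" and T L :: real
  assumes T_bounds: "0 < T" "T < 1"
    and continuous: "continuous_on {0<..<1} f"
    and decreasing: "\<And>a b. 0 < a \<Longrightarrow> a < b \<Longrightarrow> b \<le> T \<Longrightarrow> f b < f a"
    and increasing: "\<And>a b. T \<le> a \<Longrightarrow> a < b \<Longrightarrow> b < 1 \<Longrightarrow> f a < f b"
    and at_top_at_0: "filterlim f at_top (at_right 0)"
    and tendsto_at_1: "(f \<longlongrightarrow> L) (at_left 1)"
begin

abbreviation level :: "real \<Rightarrow> real set" where
  "level \<beta> \<equiv> {t \<in> {0<..<1}. f t = \<beta>}"

lemma less_limit:
  assumes "T \<le> t" "t < 1"
  shows "f t < L"
proof -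
  define b where "b = (t + 1) / 2"
  have "t < b" "b < 1"
    unfolding b_def using assms by auto
  have "eventually (\<lambda>y. y \<in> {b<..<1}) (at_left 1)"
    using \<open>b < 1\<close> by (rule eventually_at_left_real)
  then have "eventually (\<lambda>y. f b \<le> f y) (at_left 1)"
    by eventually_elim (use increasing assms \<open>t < b\<close> in \<open>auto intro: less_imp_le\<close>)
  then have "f b \<le> L"
    using tendsto_lowerbound[OF tendsto_at_1] by simp
  then show ?thesis
    using increasing[of t b] assms \<open>t < b\<close> \<open>b < 1\<close> by simp
qed

lemma min_less_limit: "f T < L"
  using less_limit T_bounds by simp

lemma min_less:
  assumes "0 < t" "t < 1" "t \<noteq> T"
  shows "f T < f t"
  using assms decreasing[of t T] increasing[of T t] by (cases "t < T") auto

lemma inj_on_left: "inj_on f {0<..T}"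
proof (rule linorder_inj_onI')
  fix i j assume "i \<in> {0<..T}" "j \<in> {0<..T}" "i < j"
  then show "f i \<noteq> f j"
    using decreasing[of i j] by auto
qed

lemma inj_on_right: "inj_on f {T..<1}"
proof (rule linorder_inj_onI')
  fix i j assume "i \<in> {T..<1}" "j \<in> {T..<1}" "i < j"
  then show "f i \<noteq> f j"
    using increasing[of i j] by auto
qed

lemma continuous_on_closed:
  assumes "0 < a" "b < 1"
  shows "continuous_on {a..b} f"
  by (rule continuous_on_subset[OF continuous]) (use assms in auto)

lemma left_preimage:
  assumes "f T < \<beta>"
  obtains t where "0 < t" "t < T" "f t = \<beta>"
proof -
  obtain a where a: "0 < a" "a < T" "f a > \<beta>"
    using filterlim_at_top_at_right_obtain[OF at_top_at_0 T_bounds(1)] by blast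
  then obtain t where "a \<le> t" "t \<le> T" "f t = \<beta>"
    using IVT2'[of f T \<beta> a] continuous_on_closed[of a T] assms T_bounds by auto
  moreover have "t \<noteq> T"
    using \<open>f t = \<beta>\<close> assms by auto
  ultimately show thesis
    using a by (intro that) auto
qed

lemma right_preimage:
  assumes "f T < \<beta>" "\<beta> < L"
  obtains t where "T < t" "t < 1" "f t = \<beta>"
proof -
  have "eventually (\<lambda>y. f y > \<beta> \<and> y \<in> {T<..<1}) (at_left 1)"
    using order_tendstoD(1)[OF tendsto_at_1 \<open>\<beta> < L\<close>] eventually_at_left_real[OF T_bounds(2)]
    by (rule eventually_conj)
  then obtain b where b: "f b > \<beta>" "T < b" "b < 1"
    using eventually_happens' trivial_limit_at_left_real by fastforce
  then obtain t where "T \<le> t" "t \<le> b" "f t = \<beta>"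
    using IVT'[of f T \<beta> b] continuous_on_closed[of T b] assms T_bounds by auto
  moreover have "t \<noteq> T"
    using \<open>f t = \<beta>\<close> assms by auto
  ultimately show thesis
    using b by (intro that) auto
qed

lemma level_below_min:
  assumes "\<beta> < f T"
  shows "level \<beta> = {}"
proof -
  have "f t \<noteq> \<beta>" if "0 < t" "t < 1" for t
    using min_less[OF that] assms by (cases "t = T") auto
  then show ?thesis
    by auto
qed

lemma level_min: "level (f T) = {T}"
proof -
  have "f t \<noteq> f T" if "0 < t" "t < 1" "t \<noteq> T" for t
    using min_less[OF that] by simp
  then show ?thesis
    using T_bounds by auto
qed

lemma level_between:
  assumes "f T < \<beta>" "\<beta> < L"
  obtains t1 t2 where "0 < t1" "t1 < T" "T < t2" "t2 < 1" "level \<beta> = {t1, t2}"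
proof -
  obtain t1 where t1: "0 < t1" "t1 < T" "f t1 = \<beta>"
    using left_preimage assms(1) by blast
  obtain t2 where t2: "T < t2" "t2 < 1" "f t2 = \<beta>"
    using right_preimage assms by blast
  have "t \<in> {t1, t2}" if "t \<in> level \<beta>" for t
  proof (cases "t \<le> T")
    case True
    then show ?thesis
      using inj_onD[OF inj_on_left, of t t1] that t1 by auto
  next
    case False
    then show ?thesis
      using inj_onD[OF inj_on_right, of t t2] that t2 by auto
  qed
  then have "level \<beta> = {t1, t2}"
    using t1 t2 T_bounds by auto
  with t1 t2 show thesis
    using that by blast
qed

lemma level_above_limit:
  assumes "L \<le> \<beta>"
  obtains t1 where "0 < t1" "t1 < T" "level \<beta> = {t1}"
proof -
  have "f T < \<beta>"
    using min_less_limit assms by simp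
  then obtain t1 where t1: "0 < t1" "t1 < T" "f t1 = \<beta>"
    by (rule left_preimage)
  have "t = t1" if "t \<in> level \<beta>" for t
  proof -
    have "t \<le> T"
      using less_limit[of t] that assms by force
    then show ?thesis
      using inj_onD[OF inj_on_left, of t t1] that t1 by auto
  qed
  then have "level \<beta> = {t1}"
    using t1 T_bounds by auto
  with t1 show thesis
    using that by blast
qed

lemma level_singleton:
  assumes "\<beta> = f T \<or> L \<le> \<beta>"
  obtains t where "0 < t" "t < 1" "level \<beta> = {t}"
proof (cases "\<beta> = f T")
  case True
  then show thesis
    using that[of T] level_min T_bounds by simp
next
  case False
  then obtain t where "0 < t" "t < T" "level \<beta> = {t}"
    using level_above_limit assms by blast
  then show thesis
    using that[of t] T_bounds by simp
qed

end

section \<open>The inverse temperature as a function of t\<close>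

(* beta_curve m n t is the inverse temperature for which t corresponds to a solution; its derivative
   has the sign of - beta_curve_Z, whose derivative in turn has the sign of beta_curve_S. *)
definition beta_curve :: "real \<Rightarrow> nat \<Rightarrow> real \<Rightarrow> real" where
  "beta_curve m n t = - ln t * (1 + m * t) ^ n / (1 - t ^ n)"

definition beta_curve_Z :: "real \<Rightarrow> nat \<Rightarrow> real \<Rightarrow> real" where
  "beta_curve_Z m n t = (1 + m * t) * (1 - t ^ n) / (m * t + t ^ n) + n * ln t"

definition beta_curve_weight :: "real \<Rightarrow> nat \<Rightarrow> real \<Rightarrow> real" where
  "beta_curve_weight m n t = (1 + m * t) ^ (n - 1) * (m * t + t ^ n) / (t * (1 - t ^ n)\<^sup>2)"

definition beta_curve_S :: "real \<Rightarrow> nat \<Rightarrow> real \<Rightarrow> real" where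
  "beta_curve_S m n t = m * t ^ n - m + n * m\<^sup>2 * t - n * t ^ (n - 1)"

lemma beta_curve_S_lower_bound:
  fixes m t :: real
  assumes "m \<ge> 0" "t \<ge> 0" "n \<ge> 1"
  shows "beta_curve_S m n t \<ge> n * (m * t * (m + 1) - m - t ^ (n - 1))"
proof -
  have "1 + real n * (t - 1) \<le> (1 + (t - 1)) ^ n"
    by (rule Bernoulli_inequality) (use assms in auto)
  then have "m * (1 + real n * (t - 1)) \<le> m * t ^ n"
    using assms by (simp add: mult_left_mono)
  then show ?thesis
    unfolding beta_curve_S_def by (simp add: algebra_simps power2_eq_square)
qed

lemma beta_curve_S_0_neg:
  fixes m :: real
  assumes "m > 0" "n \<ge> 1"
  shows "beta_curve_S m n 0 < 0"
  using assms unfolding beta_curve_S_def by (cases "n = 1") (auto simp: power_0_left)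

lemma beta_curve_S_pos:
  fixes m t :: real
  assumes "m > 0" "1 / m < t" "t \<le> 1" "n \<ge> 1"
  shows "beta_curve_S m n t > 0"
proof -
  have "t > 0"
    using assms by (meson divide_pos_pos order.strict_trans zero_less_one)
  then have "m * t > 1" "t ^ (n - 1) \<le> 1"
    using assms by (auto simp: field_simps power_le_one)
  then have "m * t * (m + 1) > m + 1"
    using assms by simp
  with \<open>t ^ (n - 1) \<le> 1\<close> have "m * t * (m + 1) - m - t ^ (n - 1) > 0"
    by linarith
  then have "n * (m * t * (m + 1) - m - t ^ (n - 1)) > 0"
    using assms by simp
  then show ?thesis
    using beta_curve_S_lower_bound[of m t n] assms \<open>t > 0\<close> by linarith
qed

lemma beta_curve_S_deriv:
  fixes m t :: real
  shows "(beta_curve_S m (Suc k) has_real_derivative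
     real (Suc k) * (m * t ^ k + m\<^sup>2 - k * t ^ (k - 1))) (at t)"
proof -
  have "t ^ k + real k * t ^ (k - 1) * t = (1 + real k) * t ^ k"
    by (cases k) (auto simp: algebra_simps)
  then show ?thesis
    unfolding beta_curve_S_def by (auto intro!: derivative_eq_intros simp: algebra_simps)
qed

lemma beta_curve_S_deriv_pos:
  fixes m t :: real
  assumes "m \<ge> 2" "0 \<le> t" "t \<le> 1 / m"
  shows "m * t ^ k + m\<^sup>2 - k * t ^ (k - 1) > 0"
proof -
  have "k * t ^ (k - 1) < m\<^sup>2"
  proof (cases k)
    case (Suc j)
    have "k * t ^ j \<le> k * (1 / m) ^ j"
      using assms by (simp add: mult_left_mono power_mono)
    also have "\<dots> < m\<^sup>2"
    proof -
      have "real k < 2 ^ k"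
        by (metis less_exp of_nat_less_iff of_nat_numeral of_nat_power)
      also have "\<dots> \<le> m ^ k"
        using assms by (simp add: power_mono)
      also have "\<dots> \<le> m ^ j * m\<^sup>2"
        using assms Suc by (simp add: power2_eq_square)
      finally show ?thesis
        using assms by (simp add: field_simps power_divide)
    qed
    finally show ?thesis
      using Suc by simp
  qed (use assms in simp)
  moreover have "m * t ^ k \<ge> 0"
    using assms by simp
  ultimately show ?thesis
    by linarith
qed

lemma beta_curve_S_strict_mono:
  fixes m a b :: real
  assumes "m \<ge> 2" "n \<ge> 1" "0 \<le> a" "a < b" "b \<le> 1 / m"
  shows "beta_curve_S m n a < beta_curve_S m n b"
proof -
  obtain k where n: "n = Suc k"
    using assms by (cases n) auto
  show ?thesis
    unfolding n
  proof (rule DERIV_pos_interior_imp_less[OF \<open>a < b\<close> beta_curve_S_deriv])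
    fix x assume "a < x" "x < b"
    then show "real (Suc k) * (m * x ^ k + m\<^sup>2 - k * x ^ (k - 1)) > 0"
      using beta_curve_S_deriv_pos[of m x k] assms by simp
  qed
qed

lemma beta_curve_S_sign_change:
  fixes m :: real
  assumes "m \<ge> 2" "n \<ge> 1"
  obtains t0 where "0 < t0" "t0 < 1"
    "\<And>t. 0 < t \<Longrightarrow> t < t0 \<Longrightarrow> beta_curve_S m n t < 0"
    "\<And>t. t0 < t \<Longrightarrow> t \<le> 1 \<Longrightarrow> beta_curve_S m n t > 0"
proof -
  have "1 / m < 1"
    using assms by simp
  have "continuous_on {0..1} (beta_curve_S m n)"
    unfolding beta_curve_S_def by (intro continuous_intros)
  then obtain t0 where t0: "0 \<le> t0" "t0 \<le> 1" "beta_curve_S m n t0 = 0"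
    using IVT'[of "beta_curve_S m n" 0 0 1] beta_curve_S_0_neg[of m n]
      beta_curve_S_pos[of m 1 n] \<open>1 / m < 1\<close> assms by auto
  then have "t0 \<noteq> 0" "t0 \<le> 1 / m"
    using beta_curve_S_0_neg[of m n] beta_curve_S_pos[of m t0 n] assms by force+
  show thesis
  proof
    show "0 < t0" "t0 < 1"
      using t0 \<open>t0 \<noteq> 0\<close> \<open>t0 \<le> 1 / m\<close> \<open>1 / m < 1\<close> by auto
    show "beta_curve_S m n t < 0" if "0 < t" "t < t0" for t
      using beta_curve_S_strict_mono[of m n t t0] t0(3) \<open>t0 \<le> 1 / m\<close> that assms by simp
    show "beta_curve_S m n t > 0" if "t0 < t" "t \<le> 1" for t
    proof (cases "t \<le> 1 / m")
      case True
      then show ?thesis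
        using beta_curve_S_strict_mono[of m n t0 t] t0(1,3) that assms by simp
    next
      case False
      then show ?thesis
        using beta_curve_S_pos[of m t n] that assms by simp
    qed
  qed
qed

lemma beta_curve_Z_deriv:
  fixes m t :: real
  assumes "0 < t" "m \<ge> 0" "n \<ge> 1"
  shows "(beta_curve_Z m n has_real_derivative
           (1 - t ^ n) * beta_curve_S m n t / (m * t + t ^ n)\<^sup>2) (at t)"
proof -
  obtain k where n: "n = Suc k"
    using assms(3) by (cases n) auto
  have B: "m * t + t ^ n > 0"
    using assms by (simp add: add_nonneg_pos)
  define N where "N = (m * (1 - t ^ n) - (1 + m * t) * (n * t ^ (n - 1))) * (m * t + t ^ n)
    - (1 + m * t) * (1 - t ^ n) * (m + n * t ^ (n - 1))"
  have D: "(beta_curve_Z m n has_real_derivative N / (m * t + t ^ n)\<^sup>2 + n / t) (at t)"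
    unfolding beta_curve_Z_def[abs_def] N_def
    using B assms by (auto intro!: derivative_eq_intros simp: power2_eq_square)
  have "N / (m * t + t ^ n)\<^sup>2 + n / t = (N * t + n * (m * t + t ^ n)\<^sup>2) / ((m * t + t ^ n)\<^sup>2 * t)"
    using B assms by (simp add: add_frac_eq)
  also have "\<dots> = (1 - t ^ n) * beta_curve_S m n t * t / ((m * t + t ^ n)\<^sup>2 * t)"
    unfolding N_def beta_curve_S_def n by (simp add: algebra_simps power2_eq_square)
  also have "\<dots> = (1 - t ^ n) * beta_curve_S m n t / (m * t + t ^ n)\<^sup>2"
    using assms by simp
  finally show ?thesis
    using D by simp
qed

lemma beta_curve_deriv:
  fixes m t :: real
  assumes "0 < t" "t < 1" "m \<ge> 0" "n \<ge> 1"
  shows "(beta_curve m n has_real_derivative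
           - beta_curve_weight m n t * beta_curve_Z m n t) (at t)"
proof -
  obtain k where n: "n = Suc k"
    using assms(4) by (cases n) auto
  have B: "m * t + t ^ n > 0"
    using assms by (simp add: add_nonneg_pos)
  have tn: "t ^ n < 1"
    using assms by (simp add: power_less_one_iff)
  define N where "N = (- (1 / t) * (1 + m * t) ^ n - ln t * (n * (1 + m * t) ^ (n - 1) * m)) * (1 - t ^ n)
    - (- ln t * (1 + m * t) ^ n) * (- (n * t ^ (n - 1)))"
  define P where "P = (1 + m * t) * (1 - t ^ n) + n * ln t * (m * t + t ^ n)"
  have D: "(beta_curve m n has_real_derivative N / (1 - t ^ n)\<^sup>2) (at t)"
    unfolding beta_curve_def[abs_def] N_def
    using assms tn
    by (auto intro!: derivative_eq_intros simp: power2_eq_square)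
      (simp only: minus_divide_left; simp add: algebra_simps)
  have "N * t = - ((1 + m * t) ^ (n - 1) * P)"
    using assms unfolding N_def P_def n by (simp add: field_simps)
  then have "N / (1 - t ^ n)\<^sup>2 = - ((1 + m * t) ^ (n - 1) * P) / (t * (1 - t ^ n)\<^sup>2)"
    using assms tn by (simp add: field_simps)
  also have "\<dots> = - beta_curve_weight m n t * beta_curve_Z m n t"
  proof -
    have P: "P = (m * t + t ^ n) * beta_curve_Z m n t"
      using B unfolding beta_curve_Z_def P_def by (simp add: field_simps)
    show ?thesis
      unfolding beta_curve_weight_def P by (simp add: mult_ac)
  qed
  finally show ?thesis
    using D by simp
qed

lemma beta_curve_weight_pos:
  fixes m t :: real
  assumes "0 < t" "t < 1" "m \<ge> 0" "n \<ge> 1"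
  shows "beta_curve_weight m n t > 0"
proof -
  have "m * t + t ^ n > 0" "t ^ n < 1"
    using assms by (simp_all add: add_nonneg_pos power_less_one_iff)
  then show ?thesis
    unfolding beta_curve_weight_def using assms by (intro divide_pos_pos mult_pos_pos) auto
qed

lemma beta_curve_ge_neg_ln:
  fixes m t :: real
  assumes "m \<ge> 0" "0 < t" "t < 1" "n \<ge> 1"
  shows "beta_curve m n t \<ge> - ln t"
proof -
  have "0 < 1 - t ^ n" "1 - t ^ n \<le> 1" "(1 + m * t) ^ n \<ge> 1"
    using assms by (auto simp: power_less_one_iff one_le_power)
  then have "(1 + m * t) ^ n / (1 - t ^ n) \<ge> 1"
    by (simp add: le_divide_eq)
  moreover have "- ln t > 0"
    using assms by simp
  ultimately have "- ln t * 1 \<le> - ln t * ((1 + m * t) ^ n / (1 - t ^ n))"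
    by (intro mult_left_mono) auto
  then show ?thesis
    unfolding beta_curve_def by simp
qed

lemma beta_curve_pos:
  fixes m t :: real
  assumes "m \<ge> 0" "0 < t" "t < 1" "n \<ge> 1"
  shows "beta_curve m n t > 0"
  using beta_curve_ge_neg_ln[OF assms] assms ln_less_zero[of t] by linarith

lemma beta_curve_at_top_at_0:
  fixes m :: real
  assumes "m \<ge> 0" "n \<ge> 1"
  shows "filterlim (beta_curve m n) at_top (at_right 0)"
proof (rule filterlim_at_top_mono)
  show "filterlim (\<lambda>t. - ln t) at_top (at_right (0::real))"
    using ln_at_0 by (simp add: filterlim_uminus_at_top)
  have "eventually (\<lambda>t. t \<in> {0<..<1}) (at_right (0::real))"
    by (rule eventually_at_right_real) simp
  then show "eventually (\<lambda>t. - ln t \<le> beta_curve m n t) (at_right 0)"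
    by eventually_elim (use beta_curve_ge_neg_ln assms in auto)
qed

lemma beta_curve_tendsto_at_1:
  fixes m :: real
  assumes "n \<ge> 1"
  shows "(beta_curve m n \<longlongrightarrow> (1 + m) ^ n / n) (at_left 1)"
proof -
  have "((\<lambda>y. (ln y - ln 1) / (y - 1)) \<longlongrightarrow> 1) (at (1::real))"
    using DERIV_ln[of 1] by (simp add: has_field_derivative_iff)
  moreover have "((\<lambda>y. (y ^ n - 1 ^ n) / (y - 1)) \<longlongrightarrow> real n * 1 ^ (n - 1)) (at (1::real))"
    using DERIV_pow[of n 1 UNIV] by (simp add: has_field_derivative_iff)
  moreover have "((\<lambda>y. (1 + m * y) ^ n) \<longlongrightarrow> (1 + m) ^ n) (at 1)"
    by (auto intro!: tendsto_eq_intros)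
  ultimately have "((\<lambda>y. ln y / (y - 1) / ((y ^ n - 1) / (y - 1)) * (1 + m * y) ^ n)
      \<longlongrightarrow> 1 / n * (1 + m) ^ n) (at 1)"
    using assms by (intro tendsto_mult tendsto_divide) auto
  then have lim: "((\<lambda>y. ln y / (y - 1) / ((y ^ n - 1) / (y - 1)) * (1 + m * y) ^ n)
      \<longlongrightarrow> (1 + m) ^ n / n) (at_left 1)"
    by (simp add: filterlim_at_split)
  have "eventually (\<lambda>y. y \<in> {0<..<1}) (at_left (1::real))"
    by (rule eventually_at_left_real) simp
  then have ev: "eventually (\<lambda>y. ln y / (y - 1) / ((y ^ n - 1) / (y - 1)) * (1 + m * y) ^ n
      = beta_curve m n y) (at_left 1)"
  proof eventually_elim
    case (elim y)
    then have "y ^ n \<noteq> 1" "y \<noteq> 1"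
      using assms power_less_one_iff[of y n] by auto
    then have "ln y / (y - 1) / ((y ^ n - 1) / (y - 1)) = - ln y / (1 - y ^ n)"
      by (simp add: divide_divide_times_eq) (metis minus_diff_eq divide_minus_right)
    then show ?case
      unfolding beta_curve_def by simp
  qed
  show ?thesis
    using tendsto_cong[OF ev] lim by simp
qed

lemma continuous_on_beta_curve:
  assumes "n \<ge> 1"
  shows "continuous_on {0<..<1} (beta_curve m n)"
proof -
  have "t ^ n < 1" if "0 < t" "t < 1" for t :: real
    using that assms by (simp add: power_less_one_iff)
  then show ?thesis
    unfolding beta_curve_def[abs_def] by (intro continuous_intros) force+
qed

lemma beta_curve_Z_1 [simp]: "beta_curve_Z m n 1 = 0"
  unfolding beta_curve_Z_def by simp

lemma beta_curve_Z_pos_near_0: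
  fixes m \<epsilon> :: real
  assumes "m \<ge> 0" "n \<ge> 1" "0 < \<epsilon>" "\<epsilon> < 1"
  obtains a where "0 < a" "a < \<epsilon>" "beta_curve_Z m n a > 0"
proof -
  have "\<exists>a. 0 < a \<and> a < \<epsilon> \<and> beta_curve_Z m n a > 0"
  proof (rule ccontr)
    assume "\<not> ?thesis"
    then have Z_nonpos: "beta_curve_Z m n t \<le> 0" if "0 < t" "t < \<epsilon>" for t
      using that by (meson not_le)
    define c where "c = \<epsilon> / 2"
    have "0 < c" "c < \<epsilon>"
      unfolding c_def using assms by auto
    \<comment> \<open>With Z \<le> 0 the curve would increase on (0, c], contradicting its blow-up at 0.\<close>
    have "beta_curve m n e \<le> beta_curve m n c" if "0 < e" "e \<le> c" for e
    proof (rule DERIV_nonneg_imp_nondecreasing[OF \<open>e \<le> c\<close>])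
      fix x assume "e \<le> x" "x \<le> c"
      then have x: "0 < x" "x < \<epsilon>" "x < 1"
        using that \<open>c < \<epsilon>\<close> assms by auto
      then have "- beta_curve_weight m n x * beta_curve_Z m n x \<ge> 0"
        using beta_curve_weight_pos[of x m n] Z_nonpos[of x] assms
        by (simp add: mult_nonneg_nonpos)
      with beta_curve_deriv[of x m n] x assms
      show "\<exists>y. (beta_curve m n has_real_derivative y) (at x) \<and> y \<ge> 0"
        by blast
    qed
    moreover obtain e where "0 < e" "e < c" "beta_curve m n e > beta_curve m n c"
      using filterlim_at_top_at_right_obtain[OF beta_curve_at_top_at_0 \<open>0 < c\<close>] assms by blast
    ultimately show False
      by fastforce
  qed
  then show thesis
    using that by blast
qed

lemma beta_curve_Z_dec_inc:
  fixes m :: real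
  assumes "m \<ge> 2" "n \<ge> 1"
  obtains t0 where "0 < t0" "t0 < 1"
    "\<And>a b. 0 < a \<Longrightarrow> a < b \<Longrightarrow> b \<le> t0 \<Longrightarrow> beta_curve_Z m n b < beta_curve_Z m n a"
    "\<And>a b. t0 \<le> a \<Longrightarrow> a < b \<Longrightarrow> b \<le> 1 \<Longrightarrow> beta_curve_Z m n a < beta_curve_Z m n b"
proof -
  obtain t0 where t0: "0 < t0" "t0 < 1"
    and S_neg: "\<And>t. 0 < t \<Longrightarrow> t < t0 \<Longrightarrow> beta_curve_S m n t < 0"
    and S_pos: "\<And>t. t0 < t \<Longrightarrow> t \<le> 1 \<Longrightarrow> beta_curve_S m n t > 0"
    using beta_curve_S_sign_change[OF assms] by blast
  define Z' where "Z' x = (1 - x ^ n) * beta_curve_S m n x / (m * x + x ^ n)\<^sup>2" for x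
  have dZ: "(beta_curve_Z m n has_real_derivative Z' x) (at x)" if "0 < x" for x
    unfolding Z'_def using beta_curve_Z_deriv[of x m n] that assms by simp
  have factor_pos: "1 - x ^ n > 0" "(m * x + x ^ n)\<^sup>2 > 0" if "0 < x" "x < 1" for x
  proof -
    show "1 - x ^ n > 0"
      using that assms by (simp add: power_less_one_iff)
    have "m * x + x ^ n > 0"
      using that assms by (intro add_nonneg_pos) auto
    then show "(m * x + x ^ n)\<^sup>2 > 0"
      by simp
  qed
  show thesis
  proof (rule that[OF t0])
    show "beta_curve_Z m n b < beta_curve_Z m n a" if "0 < a" "a < b" "b \<le> t0" for a b
    proof (rule DERIV_neg_interior_imp_greater[OF \<open>a < b\<close> dZ])
      fix x assume "a < x" "x < b"
      then show "Z' x < 0"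
        unfolding Z'_def using that t0 S_neg[of x] factor_pos[of x]
        by (intro divide_neg_pos mult_pos_neg) auto
    qed (use that in auto)
    show "beta_curve_Z m n a < beta_curve_Z m n b" if "t0 \<le> a" "a < b" "b \<le> 1" for a b
    proof (rule DERIV_pos_interior_imp_less[OF \<open>a < b\<close> dZ])
      fix x assume "a < x" "x < b"
      then show "Z' x > 0"
        unfolding Z'_def using that t0 S_pos[of x] factor_pos[of x]
        by (intro divide_pos_pos mult_pos_pos) auto
    qed (use that t0 in auto)
  qed
qed

lemma beta_curve_Z_sign_change:
  fixes m :: real
  assumes "m \<ge> 2" "n \<ge> 1"
  obtains T where "0 < T" "T < 1"
    "\<And>t. 0 < t \<Longrightarrow> t < T \<Longrightarrow> beta_curve_Z m n t > 0"
    "\<And>t. T < t \<Longrightarrow> t < 1 \<Longrightarrow> beta_curve_Z m n t < 0"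
proof -
  obtain t0 where t0: "0 < t0" "t0 < 1"
    and Z_dec: "\<And>a b. 0 < a \<Longrightarrow> a < b \<Longrightarrow> b \<le> t0 \<Longrightarrow> beta_curve_Z m n b < beta_curve_Z m n a"
    and Z_inc: "\<And>a b. t0 \<le> a \<Longrightarrow> a < b \<Longrightarrow> b \<le> 1 \<Longrightarrow> beta_curve_Z m n a < beta_curve_Z m n b"
    using beta_curve_Z_dec_inc[OF assms] by blast
  have Z_neg: "beta_curve_Z m n t < 0" if "t0 \<le> t" "t < 1" for t
    using Z_inc[of t 1] that by simp
  obtain a where a: "0 < a" "a < t0" "beta_curve_Z m n a > 0"
    using beta_curve_Z_pos_near_0[of m n t0] t0 assms by auto
  have "continuous_on {a..t0} (beta_curve_Z m n)"
  proof (intro DERIV_atLeastAtMost_imp_continuous_on)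
    fix x assume "a \<le> x" "x \<le> t0"
    then show "\<exists>D. (beta_curve_Z m n has_real_derivative D) (at x)"
      using beta_curve_Z_deriv[of x m n] a assms by auto
  qed
  then obtain T where T: "a \<le> T" "T \<le> t0" "beta_curve_Z m n T = 0"
    using IVT2'[of "beta_curve_Z m n" t0 0 a] a Z_neg[of t0] t0 by auto
  then have "a < T" "T < t0"
    using a Z_neg[of t0] t0 by (auto simp: order.order_iff_strict)
  show thesis
  proof
    show "0 < T" "T < 1"
      using \<open>a < T\<close> \<open>T < t0\<close> a t0 by auto
    show "beta_curve_Z m n t > 0" if "0 < t" "t < T" for t
      using Z_dec[of t T] that T \<open>T < t0\<close> by simp
    show "beta_curve_Z m n t < 0" if "T < t" "t < 1" for t
    proof (cases "t \<le> t0")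
      case True
      then show ?thesis
        using Z_dec[of T t] that T \<open>a < T\<close> a by simp
    next
      case False
      then show ?thesis
        using Z_neg[of t] that by simp
    qed
  qed
qed

lemma valley_beta_curve:
  fixes m :: real
  assumes "m \<ge> 2" "n \<ge> 1"
  obtains T where "valley (beta_curve m n) T ((1 + m) ^ n / n)"
proof -
  obtain T where T: "0 < T" "T < 1"
    and Z_pos: "\<And>t. 0 < t \<Longrightarrow> t < T \<Longrightarrow> beta_curve_Z m n t > 0"
    and Z_neg: "\<And>t. T < t \<Longrightarrow> t < 1 \<Longrightarrow> beta_curve_Z m n t < 0"
    using beta_curve_Z_sign_change[OF assms] by blast
  define K' where "K' x = - beta_curve_weight m n x * beta_curve_Z m n x" for x
  have dK: "(beta_curve m n has_real_derivative K' x) (at x)" if "0 < x" "x < 1" for x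
    unfolding K'_def using beta_curve_deriv[of x m n] that assms by simp
  have w: "beta_curve_weight m n x > 0" if "0 < x" "x < 1" for x
    using beta_curve_weight_pos[of x m n] that assms by simp
  show thesis
  proof (intro that valley.intro)
    show "beta_curve m n b < beta_curve m n a" if "0 < a" "a < b" "b \<le> T" for a b
    proof (rule DERIV_neg_interior_imp_greater[OF \<open>a < b\<close> dK])
      fix x assume "a < x" "x < b"
      then show "K' x < 0"
        unfolding K'_def using that T Z_pos[of x] w[of x] by (simp add: mult_pos_pos)
    qed (use that T in auto)
    show "beta_curve m n a < beta_curve m n b" if "T \<le> a" "a < b" "b < 1" for a b
    proof (rule DERIV_pos_interior_imp_less[OF \<open>a < b\<close> dK])
      fix x assume "a < x" "x < b"
      then show "K' x > 0"
        unfolding K'_def using that T Z_neg[of x] w[of x] by (simp add: mult_pos_neg)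
    qed (use that T in auto)
  qed (use T assms continuous_on_beta_curve beta_curve_at_top_at_0 beta_curve_tendsto_at_1 in auto)
qed

section \<open>The mean-field equation\<close>

(* An involution of [0, infinity): the mean-field equation reads u = mf_subst m (exp Delta(u)),
   i.e. exp Delta(u) = mf_subst m u. *)
definition mf_subst :: "real \<Rightarrow> real \<Rightarrow> real" where
  "mf_subst m x = (1 - x) / (1 + m * x)"

lemma mf_subst_involution:
  assumes "m \<ge> 0" "x \<ge> 0"
  shows "mf_subst m (mf_subst m x) = x"
proof -
  have "1 + m * x > 0" "1 + m > 0"
    using assms by (simp_all add: add_pos_nonneg)
  then have "1 - mf_subst m x = x * (1 + m) / (1 + m * x)"
    "1 + m * mf_subst m x = (1 + m) / (1 + m * x)"
    unfolding mf_subst_def by (simp_all add: field_simps)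
  with \<open>1 + m * x > 0\<close> \<open>1 + m > 0\<close> show ?thesis
    unfolding mf_subst_def[of m "mf_subst m x"] by simp
qed

lemma mf_subst_bounds:
  assumes "m \<ge> 0" "0 < x" "x < 1"
  shows "0 < mf_subst m x" "mf_subst m x < 1"
proof -
  have "m * x \<ge> 0"
    using assms by simp
  then have "1 + m * x > 0" "1 - x < 1 + m * x"
    using assms by linarith+
  then show "0 < mf_subst m x" "mf_subst m x < 1"
    unfolding mf_subst_def using assms by simp_all
qed

lemma mf_subst_strict_antimono:
  assumes "m \<ge> 0" "0 \<le> s" "s < t"
  shows "mf_subst m t < mf_subst m s"
proof -
  have "1 + m * s > 0" "1 + m * t > 0"
    using assms by (simp_all add: add_pos_nonneg)
  moreover have "(1 - s) * (1 + m * t) - (1 - t) * (1 + m * s) = (t - s) * (1 + m)"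
    by (simp add: algebra_simps)
  moreover have "(t - s) * (1 + m) > 0"
    using assms by simp
  ultimately show ?thesis
    unfolding mf_subst_def by (simp add: divide_less_eq less_divide_eq mult.commute)
qed

lemma mf_Delta_mf_subst:
  fixes m u :: real
  assumes "real q = 1 + m" "m \<ge> 0" "0 \<le> u"
  shows "mf_Delta \<beta> q z u
    = - \<beta> * (1 - mf_subst m u ^ (z - 1)) / (1 + m * mf_subst m u) ^ (z - 1)"
proof -
  define a where "a = 1 + m * u"
  have "a > 0"
    unfolding a_def using assms by (simp add: add_pos_nonneg)
  have sum: "1 + m * mf_subst m u = (1 + m) / a"
    unfolding mf_subst_def a_def using \<open>a > 0\<close> a_def by (simp add: field_simps)
  have subst: "mf_subst m u = (1 - u) / a"
    unfolding mf_subst_def a_def ..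
  have a_q: "1 + (real q - 1) * u = a"
    unfolding a_def assms(1) by simp
  have "- \<beta> * (1 - B / A) / (C / A) = - (\<beta> / C) * (A - B)" if "A > 0" "C > 0"
    for A B C :: real
    using that by (simp add: field_simps)
  moreover have "a ^ (z - 1) > 0" "(1 + m) ^ (z - 1) > 0"
    using assms \<open>a > 0\<close> by simp_all
  ultimately show ?thesis
    unfolding mf_Delta_def a_q sum unfolding subst power_divide assms(1) by metis
qed

lemma beta_curve_eq_iff:
  fixes m t :: real
  assumes "m \<ge> 0" "0 < t" "t < 1" "n \<ge> 1"
  shows "beta_curve m n t = \<beta> \<longleftrightarrow> - \<beta> * (1 - t ^ n) / (1 + m * t) ^ n = ln t"
proof -
  have "(1 + m * t) ^ n > 0" "1 - t ^ n > 0"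
    using assms by (simp_all add: add_pos_nonneg power_less_one_iff)
  then have "beta_curve m n t = \<beta> \<longleftrightarrow> - ln t * (1 + m * t) ^ n = \<beta> * (1 - t ^ n)"
    unfolding beta_curve_def by (intro nonzero_divide_eq_eq) simp
  also have "\<dots> \<longleftrightarrow> - \<beta> * (1 - t ^ n) = ln t * (1 + m * t) ^ n"
    by (auto simp: algebra_simps)
  also have "\<dots> \<longleftrightarrow> - \<beta> * (1 - t ^ n) / (1 + m * t) ^ n = ln t"
    using \<open>(1 + m * t) ^ n > 0\<close> by (intro nonzero_divide_eq_eq[symmetric]) linarith
  finally show ?thesis .
qed

lemma mf_solutions_iff:
  assumes "q \<ge> 1" "z \<ge> 2"
  shows "u \<in> mf_solutions \<beta> q z \<longleftrightarrow> u = 0 \<or>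
    (0 < u \<and> u < 1 \<and> beta_curve (real q - 1) (z - 1) (mf_subst (real q - 1) u) = \<beta>)"
proof -
  define m where "m = real q - 1"
  have m: "m \<ge> 0" "real q = 1 + m"
    unfolding m_def using assms by auto
  have "u \<in> mf_solutions \<beta> q z \<longleftrightarrow>
      0 \<le> u \<and> u < 1 \<and> u = mf_subst m (exp (mf_Delta \<beta> q z u))"
    unfolding mf_solutions_def mf_subst_def m_def by simp
  also have "\<dots> \<longleftrightarrow> 0 \<le> u \<and> u < 1 \<and> exp (mf_Delta \<beta> q z u) = mf_subst m u"
    using mf_subst_involution[OF m(1), of u] mf_subst_involution[OF m(1), of "exp (mf_Delta \<beta> q z u)"]
    by force
  finally have sol: "u \<in> mf_solutions \<beta> q z \<longleftrightarrow>
      0 \<le> u \<and> u < 1 \<and> exp (mf_Delta \<beta> q z u) = mf_subst m u" .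
  consider "u = 0" | "0 < u" "u < 1" | "\<not> (0 \<le> u \<and> u < 1)"
    by linarith
  then show ?thesis
  proof cases
    case 1
    then show ?thesis
      using sol mf_Delta_mf_subst[OF m(2,1), of 0] by (simp add: mf_subst_def)
  next
    case 2
    define t where "t = mf_subst m u"
    have t: "0 < t" "t < 1"
      unfolding t_def using mf_subst_bounds m 2 by auto
    then have "exp (mf_Delta \<beta> q z u) = t \<longleftrightarrow> mf_Delta \<beta> q z u = ln t"
      by auto
    also have "\<dots> \<longleftrightarrow> beta_curve m (z - 1) t = \<beta>"
      using mf_Delta_mf_subst[OF m(2,1), of u] beta_curve_eq_iff[OF m(1) t, of "z - 1"] assms 2
      unfolding t_def by simp
    finally show ?thesis
      using sol 2 unfolding t_def m_def by auto
  next
    case 3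
    then show ?thesis
      using sol by auto
  qed
qed

lemma mf_solutions_eq:
  assumes "q \<ge> 1" "z \<ge> 2"
  shows "mf_solutions \<beta> q z = insert 0
    (mf_subst (real q - 1) ` {t \<in> {0<..<1}. beta_curve (real q - 1) (z - 1) t = \<beta>})"
    (is "_ = insert 0 (?\<phi> ` ?level)")
proof -
  have m: "real q - 1 \<ge> 0"
    using assms by simp
  have "u \<in> ?\<phi> ` ?level \<longleftrightarrow> 0 < u \<and> u < 1 \<and> beta_curve (real q - 1) (z - 1) (?\<phi> u) = \<beta>"
    for u
  proof
    assume "u \<in> ?\<phi> ` ?level"
    then obtain t where "t \<in> ?level" "u = ?\<phi> t"
      by blast
    then show "0 < u \<and> u < 1 \<and> beta_curve (real q - 1) (z - 1) (?\<phi> u) = \<beta>"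
      using mf_subst_bounds[OF m] mf_subst_involution[OF m] by auto
  next
    assume u: "0 < u \<and> u < 1 \<and> beta_curve (real q - 1) (z - 1) (?\<phi> u) = \<beta>"
    then have "?\<phi> u \<in> ?level"
      using mf_subst_bounds[OF m] by auto
    moreover have "u = ?\<phi> (?\<phi> u)"
      using mf_subst_involution[OF m] u by simp
    ultimately show "u \<in> ?\<phi> ` ?level"
      by blast
  qed
  then show ?thesis
    using mf_solutions_iff[OF assms] by blast
qed

lemma mf_solutions_trivial:
  assumes "q \<ge> 1" "z \<ge> 2" "{t \<in> {0<..<1}. beta_curve (real q - 1) (z - 1) t = \<beta>} = {}"
  shows "mf_solutions \<beta> q z = {0}"
  unfolding mf_solutions_eq[OF assms(1,2)] assms(3) by simp

lemma mf_solutions_one_nontrivial: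
  assumes "q \<ge> 1" "z \<ge> 2" "0 < t" "t < 1"
    and "{s \<in> {0<..<1}. beta_curve (real q - 1) (z - 1) s = \<beta>} = {t}"
  shows "\<exists>u. 0 < u \<and> u < 1 \<and> mf_solutions \<beta> q z = {0, u}"
  using mf_subst_bounds[of "real q - 1" t] assms
  unfolding mf_solutions_eq[OF assms(1,2)] assms(5) by auto

lemma mf_solutions_two_nontrivial:
  assumes "q \<ge> 1" "z \<ge> 2" "0 < t1" "t1 < t2" "t2 < 1"
    and "{s \<in> {0<..<1}. beta_curve (real q - 1) (z - 1) s = \<beta>} = {t1, t2}"
  shows "\<exists>u1 u2. 0 < u1 \<and> u1 < u2 \<and> u2 < 1 \<and> mf_solutions \<beta> q z = {0, u1, u2}"
proof -
  have "real q - 1 \<ge> 0"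
    using assms by simp
  then have "0 < mf_subst (real q - 1) t2" "mf_subst (real q - 1) t2 < mf_subst (real q - 1) t1"
    "mf_subst (real q - 1) t1 < 1"
    using mf_subst_bounds mf_subst_strict_antimono assms by auto
  moreover have "mf_solutions \<beta> q z = {0, mf_subst (real q - 1) t2, mf_subst (real q - 1) t1}"
    unfolding mf_solutions_eq[OF assms(1,2)] assms(6) by auto
  ultimately show ?thesis
    by blast
qed

theorem lemma5p4:
  fixes q z :: nat
  assumes "q > 2" and "z \<ge> 2"
  shows "\<exists>\<beta>0 \<beta>1. 0 < \<beta>0 \<and> \<beta>0 < \<beta>1 \<and>
    (\<forall>\<beta>. 0 < \<beta> \<and> \<beta> < \<beta>0 \<longrightarrow> mf_solutions \<beta> q z = {0}) \<and>
    (\<forall>\<beta>. \<beta>0 < \<beta> \<and> \<beta> < \<beta>1 \<longrightarrow>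
       (\<exists>u1 u2. 0 < u1 \<and> u1 < u2 \<and> u2 < 1 \<and> mf_solutions \<beta> q z = {0, u1, u2})) \<and>
    (\<forall>\<beta>. \<beta> = \<beta>0 \<or> \<beta> \<ge> \<beta>1 \<longrightarrow>
       (\<exists>u2. 0 < u2 \<and> u2 < 1 \<and> mf_solutions \<beta> q z = {0, u2}))"
proof -
  define m where "m = real q - 1"
  define n where "n = z - 1"
  have q: "q \<ge> 1" and m: "m \<ge> 2" and n: "n \<ge> 1"
    unfolding m_def n_def using assms by auto
  obtain T where "valley (beta_curve m n) T ((1 + m) ^ n / n)"
    using valley_beta_curve[OF m n] .
  then interpret valley "beta_curve m n" T "(1 + m) ^ n / n" .
  show ?thesis
  proof (rule exI[of _ "beta_curve m n T"], rule exI[of _ "(1 + m) ^ n / n"], intro conjI allI impI)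
    show "0 < beta_curve m n T"
      using beta_curve_pos T_bounds m n by simp
    show "beta_curve m n T < (1 + m) ^ n / n"
      by (rule min_less_limit)
  next
    fix \<beta> assume "0 < \<beta> \<and> \<beta> < beta_curve m n T"
    then show "mf_solutions \<beta> q z = {0}"
      using level_below_min[of \<beta>] mf_solutions_trivial[OF q assms(2)] unfolding m_def n_def by simp
  next
    fix \<beta> assume "beta_curve m n T < \<beta> \<and> \<beta> < (1 + m) ^ n / n"
    then obtain t1 t2 where "0 < t1" "t1 < T" "T < t2" "t2 < 1" "level \<beta> = {t1, t2}"
      using level_between by blast
    then show "\<exists>u1 u2. 0 < u1 \<and> u1 < u2 \<and> u2 < 1 \<and> mf_solutions \<beta> q z = {0, u1, u2}"
      using mf_solutions_two_nontrivial[OF q assms(2), of t1 t2] unfolding m_def n_def by simp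
  next
    fix \<beta> assume "\<beta> = beta_curve m n T \<or> (1 + m) ^ n / n \<le> \<beta>"
    then obtain t where "0 < t" "t < 1" "level \<beta> = {t}"
      by (rule level_singleton)
    then show "\<exists>u2. 0 < u2 \<and> u2 < 1 \<and> mf_solutions \<beta> q z = {0, u2}"
      using mf_solutions_one_nontrivial[OF q assms(2), of t] unfolding m_def n_def by simp
  qed
qed

end
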